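(* Let $\alpha\in(\frac12,1)$ and run Algorithm 1 on vectors $g_t$ with $\|g_t\|\le G$ and learning rates $$\eta_t=\frac{G^{2\alpha-1}}{\big(2G^2+\sum_{i=1}^{t-1}\|g_i\|^2\big)^\alpha}.$$ Then $S_T\le\sqrt{4+\frac1{2\alpha-1}}$ for every $T\ge0$; in particular $S_\infty=\lim_{T\to\infty}S_T\le\sqrt{4+\frac1{2\alpha-1}}$.
   Context: $\|\cdot\|$ is the Euclidean norm, $G>0$. In Algorithm 1, $S_0^2=4$ and for $t\ge1$, with $\ell_t=\eta_tg_t$, $S_t^2=S_{t-1}^2+\|\ell_t\|^2$ ($S_t>0$). *)

theory Defs
  imports "HOL-Analysis.Analysis"
begin

definition eta :: "real \<Rightarrow> real \<Rightarrow> (nat \<Rightarrow> 'a::real_normed_vector) \<Rightarrow> nat \<Rightarrow> real" where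
  "eta G \<alpha> g t = G powr (2*\<alpha> - 1) / (2 * G^2 + (\<Sum>i=1..<t. (norm (g i))^2)) powr \<alpha>"

text \<open>S_T with S_0^2 = 4 and S_t^2 = S_{t-1}^2 + |eta_t g_t|^2, S_t > 0.\<close>
definition S :: "real \<Rightarrow> real \<Rightarrow> (nat \<Rightarrow> 'a::real_normed_vector) \<Rightarrow> nat \<Rightarrow> real" where
  "S G \<alpha> g T = sqrt (4 + (\<Sum>t=1..T. (norm (eta G \<alpha> g t *\<^sub>R g t))^2))"

end

theory Submission
  imports Defs
begin

text \<open>With \<open>b = 2\<alpha> - 1 > 0\<close> and \<open>P\<^sub>t = G\<^sup>2 + \<Sum>\<^sub>i\<^sub>\<le>\<^sub>t \<parallel>g\<^sub>i\<parallel>\<^sup>2\<close>, the bound \<open>\<parallel>g\<^sub>t\<parallel> \<le> G\<close> gives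
  \<open>\<parallel>\<eta>\<^sub>t g\<^sub>t\<parallel>\<^sup>2 \<le> G\<^sup>2\<^sup>b \<parallel>g\<^sub>t\<parallel>\<^sup>2 / P\<^sub>t\<^sup>1\<^sup>+\<^sup>b\<close>. Since \<open>P\<^sub>t - P\<^sub>t\<^sub>-\<^sub>1 = \<parallel>g\<^sub>t\<parallel>\<^sup>2\<close>, each such term is at most
  \<open>(P\<^sub>t\<^sub>-\<^sub>1\<^sup>-\<^sup>b - P\<^sub>t\<^sup>-\<^sup>b)/b\<close> (the integral of \<open>s\<^sup>-\<^sup>1\<^sup>-\<^sup>b\<close> over \<open>[P\<^sub>t\<^sub>-\<^sub>1, P\<^sub>t]\<close> dominates it), so the
  sum telescopes to at most \<open>G\<^sup>2\<^sup>b P\<^sub>0\<^sup>-\<^sup>b / b = 1/b\<close>. Hence \<open>S\<^sub>T\<^sup>2 \<le> 4 + 1/b\<close>, and the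
  increasing bounded sequence \<open>S\<close> converges with the same bound.\<close>

lemma increment_div_powr_le_powr_diff:
  fixes x a b :: real
  assumes x: "x > 0" and a: "a \<ge> 0" and b: "b > 0"
  shows "a / (x + a) powr (1 + b) \<le> (x powr (-b) - (x + a) powr (-b)) / b"
proof -
  define y where "y = x + a"
  have y: "y > 0" using x a y_def by simp
  define r where "r = x / y"
  have r0: "r > 0" using x y by (simp add: r_def)
  have "1 + b * (1 - r) \<le> 1 - b * ln r"
    using mult_left_mono[OF ln_le_minus_one[OF r0], of b] b by (simp add: algebra_simps)
  also have "\<dots> \<le> exp (- b * ln r)" using exp_ge_add_one_self[of "- b * ln r"] by simp
  also have "\<dots> = r powr (-b)" using r0 by (simp add: powr_def)
  finally have bernoulli: "1 + b * (1 - r) \<le> r powr (-b)" .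
  have x_eq: "x = r * y" using y by (simp add: r_def)
  have a_eq: "a = y * (1 - r)" using x_eq by (simp add: y_def algebra_simps)
  have yb: "y powr b > 0" using y by simp
  have "a / y powr (1 + b) = (1 - r) / y powr b" using a_eq y yb by (simp add: powr_add)
  also have "\<dots> \<le> (r powr (-b) - 1) / b / y powr b"
    using bernoulli b yb by (intro divide_right_mono) (auto simp: field_simps)
  also have "\<dots> = (x powr (-b) - y powr (-b)) / b"
    using x_eq r0 y yb b by (simp add: powr_mult powr_minus field_simps)
  finally show ?thesis by (simp add: y_def)
qed

lemma sum_div_partial_sum_powr_le:
  fixes a :: "nat \<Rightarrow> real" and x b :: real
  assumes x: "x > 0" and a: "\<And>i. a i \<ge> 0" and b: "b > 0"
  shows "(\<Sum>t=1..T. a t / (x + (\<Sum>i=1..t. a i)) powr (1 + b)) \<le> x powr (-b) / b"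
proof -
  define P where "P t = x + (\<Sum>i=1..t. a i)" for t
  have P_pos: "P t > 0" for t using x a by (simp add: P_def sum_nonneg add_pos_nonneg)
  have "(\<Sum>t=1..T. a t / P t powr (1 + b)) \<le> (x powr (-b) - P T powr (-b)) / b"
  proof (induction T)
    case 0
    then show ?case by (simp add: P_def)
  next
    case (Suc T)
    have "a (Suc T) / P (Suc T) powr (1 + b) \<le> (P T powr (-b) - P (Suc T) powr (-b)) / b"
      using increment_div_powr_le_powr_diff[OF P_pos a b] by (simp add: P_def add.assoc)
    with Suc.IH show ?case by (simp add: diff_divide_distrib)
  qed
  also have "\<dots> \<le> x powr (-b) / b" using b by (simp add: divide_right_mono)
  finally show ?thesis by (simp add: P_def)
qed

lemma norm_eta_scaleR_squared_le:
  fixes g :: "nat \<Rightarrow> 'a::real_normed_vector"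
  assumes G: "G > 0" and \<alpha>: "\<alpha> \<ge> 0" and t: "t \<ge> 1" and g_t: "norm (g t) \<le> G"
  shows "(norm (eta G \<alpha> g t *\<^sub>R g t))\<^sup>2
    \<le> G powr (2 * (2*\<alpha> - 1)) * ((norm (g t))\<^sup>2 / (G\<^sup>2 + (\<Sum>i=1..t. (norm (g i))\<^sup>2)) powr (2*\<alpha>))"
proof -
  define A where "A = (\<Sum>i=1..<t. (norm (g i))\<^sup>2)"
  define P where "P = G\<^sup>2 + (\<Sum>i=1..t. (norm (g i))\<^sup>2)"
  have A: "A \<ge> 0" by (simp add: A_def sum_nonneg)
  have P_eq: "P = G\<^sup>2 + A + (norm (g t))\<^sup>2"
    using t by (simp add: P_def A_def atLeastLessThanSuc_atLeastAtMost[symmetric])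
  have P_pos: "P > 0" using P_eq A G by (simp add: add_pos_nonneg)
  have P_le: "P \<le> 2 * G\<^sup>2 + A" using P_eq g_t power_mono[OF g_t norm_ge_zero, of 2] by simp
  then have denom: "P powr (2*\<alpha>) \<le> (2 * G\<^sup>2 + A) powr (2*\<alpha>)"
    using P_pos \<alpha> by (intro powr_mono2) auto
  have "(eta G \<alpha> g t)\<^sup>2 = G powr (2 * (2*\<alpha> - 1)) / (2 * G\<^sup>2 + A) powr (2*\<alpha>)"
    using A by (simp add: eta_def A_def power2_eq_square powr_add[symmetric])
  also have "\<dots> \<le> G powr (2 * (2*\<alpha> - 1)) / P powr (2*\<alpha>)"
    using denom P_pos P_le by (intro divide_left_mono) auto
  finally have "(eta G \<alpha> g t)\<^sup>2 * (norm (g t))\<^sup>2 \<le> G powr (2 * (2*\<alpha> - 1)) / P powr (2*\<alpha>) * (norm (g t))\<^sup>2"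
    by (rule mult_right_mono) simp
  then show ?thesis by (simp add: P_def power_mult_distrib)
qed

theorem lemma22:
  fixes g :: "nat \<Rightarrow> 'a::euclidean_space" and G \<alpha> :: real
  assumes "G > 0" and "1/2 < \<alpha>" and "\<alpha> < 1"
    and "\<And>t. t \<ge> 1 \<Longrightarrow> norm (g t) \<le> G"
  shows "(\<forall>T. S G \<alpha> g T \<le> sqrt (4 + 1 / (2*\<alpha> - 1)))
         \<and> convergent (S G \<alpha> g) \<and> lim (S G \<alpha> g) \<le> sqrt (4 + 1 / (2*\<alpha> - 1))"
proof -
  define b where "b = 2*\<alpha> - 1"
  have b: "b > 0" and two_\<alpha>: "2*\<alpha> = 1 + b" using assms(2) by (auto simp: b_def)
  have "(G\<^sup>2) powr (-b) = G powr (2 * -b)"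
    using \<open>G > 0\<close> powr_powr[of G 2 "-b"] powr_realpow[of G 2] by simp
  then have G_powr: "G powr (2*b) * (G\<^sup>2) powr (-b) = 1"
    using \<open>G > 0\<close> by (simp add: powr_add[symmetric])
  have "(\<Sum>t=1..T. (norm (eta G \<alpha> g t *\<^sub>R g t))\<^sup>2) \<le> 1 / b" for T
  proof -
    have "(\<Sum>t=1..T. (norm (eta G \<alpha> g t *\<^sub>R g t))\<^sup>2)
        \<le> (\<Sum>t=1..T. G powr (2 * (2*\<alpha> - 1))
              * ((norm (g t))\<^sup>2 / (G\<^sup>2 + (\<Sum>i=1..t. (norm (g i))\<^sup>2)) powr (2*\<alpha>)))"
      using assms by (intro sum_mono norm_eta_scaleR_squared_le) auto
    also have "\<dots> = G powr (2*b) * (\<Sum>t=1..T. (norm (g t))\<^sup>2 / (G\<^sup>2 + (\<Sum>i=1..t. (norm (g i))\<^sup>2)) powr (1 + b))"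
      unfolding b_def[symmetric] two_\<alpha> by (simp add: sum_distrib_left)
    also have "\<dots> \<le> G powr (2*b) * ((G\<^sup>2) powr (-b) / b)"
      using \<open>G > 0\<close> b by (intro mult_left_mono sum_div_partial_sum_powr_le) auto
    finally show ?thesis using G_powr by simp
  qed
  then have bounded: "S G \<alpha> g T \<le> sqrt (4 + 1 / (2*\<alpha> - 1))" for T
    by (simp add: S_def b_def)
  have "incseq (S G \<alpha> g)" by (simp add: incseq_Suc_iff S_def)
  then obtain L where L: "S G \<alpha> g \<longlonglongrightarrow> L"
    using incseq_convergent bounded by blast
  then show ?thesis
    using bounded LIMSEQ_le_const2[OF L] by (auto simp: convergentI limI)
qed

end
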